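(* Let $0<m\le L$, $\kappa=L/m$, and consider the accelerated gradient flow dynamics with $\alpha=1/L$ and constant parameters $(\beta,\gamma)$. The optimal (largest) exponential convergence rate achievable for all $f\in\mathcal{Q}_m^L$ is $\rho=1/\sqrt\kappa$, and the corresponding parameters are $\beta=1+(v-2)/\sqrt\kappa$, $\gamma=v\sqrt\kappa$, where $v\in[0,1]$. This rate is achieved by the heavy-ball dynamics ($\gamma=0$) with $v=0$ and, for $\kappa\ge4$, by Nesterov's dynamics ($\gamma=\beta$) with $v=(\sqrt\kappa-2)/(\kappa-1)$.
   Context: $\mathcal{Q}_m^L$ is the class of quadratic functions $f(x)=\tfrac12x^TQx-q^Tx$ on $\mathbb{R}^n$ with $q\in\mathbb{R}^n$, $Q=Q^T\succ0$ whose largest eigenvalue is $L$ and smallest is $m$; $x^\star$ is the minimizer. The (noiseless) accelerated gradient flow dynamics is $\ddot x+\theta\dot x+\alpha\nabla f(x+\gamma\dot x)=0$ with $\theta=1-\beta$; with $\psi=[(x-x^\star)^T,\dot x^T]^T$ this is $\dot\psi=A\psi$, $A=\begin{bmatrix}0&I\\-\alpha Q&-(\theta I+\gamma\alpha Q)\end{bmatrix}$. It is exponentially stable with rate $\rho>0$ for all $f\in\mathcal{Q}_m^L$ if, for every $f\in\mathcal{Q}_m^L$, all eigenvalues of $A$ have real part at most $-\rho$. *)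

theory Defs
  imports Complex_Main "Jordan_Normal_Form.Char_Poly"
begin

text \<open>A quadratic f(x) = 1/2 x^T Q x - q^T x on R^n is represented by its data (Q, q).\<close>

definition in_QmL :: "nat \<Rightarrow> real \<Rightarrow> real \<Rightarrow> real mat \<Rightarrow> real vec \<Rightarrow> bool" where
  "in_QmL n m L Q q \<longleftrightarrow>
     Q \<in> carrier_mat n n \<and> q \<in> carrier_vec n \<and>
     transpose_mat Q = Q \<and>
     (\<forall>x \<in> carrier_vec n. x \<noteq> 0\<^sub>v n \<longrightarrow> x \<bullet> (Q *\<^sub>v x) > 0) \<and>
     eigenvalue Q L \<and> (\<forall>\<mu>. eigenvalue Q \<mu> \<longrightarrow> \<mu> \<le> L) \<and>
     eigenvalue Q m \<and> (\<forall>\<mu>. eigenvalue Q \<mu> \<longrightarrow> m \<le> \<mu>)"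

definition agf_mat :: "real \<Rightarrow> real \<Rightarrow> real \<Rightarrow> real mat \<Rightarrow> real mat" where
  "agf_mat \<alpha> \<beta> \<gamma> Q =
     (let n = dim_row Q; \<theta> = 1 - \<beta> in
      four_block_mat (0\<^sub>m n n) (1\<^sub>m n)
                     ((- \<alpha>) \<cdot>\<^sub>m Q) (- (\<theta> \<cdot>\<^sub>m 1\<^sub>m n + (\<gamma> * \<alpha>) \<cdot>\<^sub>m Q)))"

definition agf_exp_stable ::
  "nat \<Rightarrow> real \<Rightarrow> real \<Rightarrow> real \<Rightarrow> real \<Rightarrow> real \<Rightarrow> real \<Rightarrow> bool" where
  "agf_exp_stable n m L \<alpha> \<beta> \<gamma> \<rho> \<longleftrightarrow>
     \<rho> > 0 \<and>
     (\<forall>Q q. in_QmL n m L Q q \<longrightarrow>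
        (\<forall>\<mu>::complex. eigenvalue (map_mat complex_of_real (agf_mat \<alpha> \<beta> \<gamma> Q)) \<mu>
           \<longrightarrow> Re \<mu> \<le> - \<rho>))"

end

theory Submission
  imports Defs
begin

(* For an eigenvector x of Q with eigenvalue c, the plane spanned by (x, 0) and (0, x)
   is invariant under A, and A restricted to it has characteristic polynomial
   s^2 + (1 - beta + gamma alpha c) s + alpha c;
   conversely every eigenvalue of A arises this way, because the eigenvalues of the real symmetric
   Q are real. All roots of a real quadratic s^2 + p s + q have real part at most -rho iff the
   shifted quadratic (s - rho)^2 + p (s - rho) + q has nonnegative coefficients. These two conditions
   are affine in alpha c, which ranges over [m/L, 1], and Q = diag(L, m, ..., m) attains both ends,
   so stability with rate rho amounts to the conditions at alpha c = 1/kappa and alpha c = 1.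
   At 1/kappa they give rho^2 <= 1/kappa, with equality only if the damping equals 2/sqrt kappa;
   the conditions at 1 then confine gamma/sqrt kappa to [0, 1]. *)

section \<open>Roots of real quadratics\<close>

lemma quadratic_roots_Re_nonpos_iff:
  fixes p q :: real
  shows "(\<forall>s::complex. s\<^sup>2 + of_real p * s + of_real q = 0 \<longrightarrow> Re s \<le> 0) \<longleftrightarrow> 0 \<le> p \<and> 0 \<le> q"
proof
  assume roots: "\<forall>s::complex. s\<^sup>2 + of_real p * s + of_real q = 0 \<longrightarrow> Re s \<le> 0"
  define d where "d = csqrt (of_real (p\<^sup>2 - 4 * q))"
  define s1 s2 where "s1 = (d - of_real p) / 2" and "s2 = (- d - of_real p) / 2"
  have factor: "s\<^sup>2 + of_real p * s + of_real q = (s - s1) * (s - s2)" for s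
  proof -
    have "d\<^sup>2 = of_real (p\<^sup>2 - 4 * q)" by (simp add: d_def)
    then show ?thesis by (simp add: s1_def s2_def field_simps power2_eq_square)
  qed
  have sum: "s1 + s2 = - of_real p"
    by (simp add: s1_def s2_def field_simps)
  have prod: "s1 * s2 = of_real q"
    using factor[of 0] by simp
  have Re_roots: "Re s1 \<le> 0" "Re s2 \<le> 0"
    using roots factor[of s1] factor[of s2] by auto
  have "Re s1 + Re s2 = - p"
    using arg_cong[OF sum, of Re] by simp
  moreover have "Re s1 * Re s2 + (Im s1)\<^sup>2 = q"
  proof -
    have "Im s2 = - Im s1"
      using arg_cong[OF sum, of Im] by simp
    then show ?thesis
      using arg_cong[OF prod, of Re] by (simp add: power2_eq_square)
  qed
  ultimately show "0 \<le> p \<and> 0 \<le> q"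
    using Re_roots mult_nonpos_nonpos[OF Re_roots] zero_le_power2[of "Im s1"] by linarith
next
  assume coeffs: "0 \<le> p \<and> 0 \<le> q"
  show "\<forall>s::complex. s\<^sup>2 + of_real p * s + of_real q = 0 \<longrightarrow> Re s \<le> 0"
  proof (intro allI impI)
    fix s :: complex
    assume "s\<^sup>2 + of_real p * s + of_real q = 0"
    then have re: "(Re s)\<^sup>2 - (Im s)\<^sup>2 + p * Re s + q = 0" and im: "Im s * (2 * Re s + p) = 0"
      by (simp_all add: complex_eq_iff power2_eq_square algebra_simps)
    show "Re s \<le> 0"
    proof (cases "Im s = 0")
      case True
      with re have re_real: "(Re s)\<^sup>2 + p * Re s + q = 0"
        by simp
      show ?thesis
      proof (rule ccontr)
        assume "\<not> Re s \<le> 0"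
        then have "0 < (Re s)\<^sup>2" "0 \<le> p * Re s"
          using coeffs by auto
        with re_real coeffs show False
          by linarith
      qed
    next
      case False
      with im coeffs show ?thesis by simp
    qed
  qed
qed

lemma quadratic_roots_Re_le_iff:
  fixes p q \<rho> :: real
  shows "(\<forall>s::complex. s\<^sup>2 + of_real p * s + of_real q = 0 \<longrightarrow> Re s \<le> - \<rho>)
    \<longleftrightarrow> 2 * \<rho> \<le> p \<and> 0 \<le> \<rho>\<^sup>2 - p * \<rho> + q"
proof -
  have shift: "(s - of_real \<rho>)\<^sup>2 + of_real p * (s - of_real \<rho>) + of_real q
      = s\<^sup>2 + of_real (p - 2 * \<rho>) * s + of_real (\<rho>\<^sup>2 - p * \<rho> + q)" for s :: complex
    by (simp add: power2_eq_square algebra_simps)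
  have "(\<forall>s::complex. s\<^sup>2 + of_real p * s + of_real q = 0 \<longrightarrow> Re s \<le> - \<rho>)
      \<longleftrightarrow> (\<forall>s::complex. (s - of_real \<rho>)\<^sup>2 + of_real p * (s - of_real \<rho>) + of_real q = 0
            \<longrightarrow> Re (s - of_real \<rho>) \<le> - \<rho>)"
    by (metis add_diff_cancel_right')
  also have "\<dots> \<longleftrightarrow> 0 \<le> p - 2 * \<rho> \<and> 0 \<le> \<rho>\<^sup>2 - p * \<rho> + q"
    using quadratic_roots_Re_nonpos_iff[of "p - 2 * \<rho>" "\<rho>\<^sup>2 - p * \<rho> + q"]
    unfolding shift by simp
  finally show ?thesis by simp
qed

section \<open>Eigenvalues of real symmetric matrices\<close>

lemma eigenvalue_map_of_real_iff:
  assumes "A \<in> carrier_mat n n"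
  shows "eigenvalue (map_mat complex_of_real A) (of_real c) \<longleftrightarrow> eigenvalue A c"
  using assms by (simp add: eigenvalue_root_char_poly[of _ n] of_real_hom.char_poly_hom)

lemma real_symmetric_eigenvalue_in_Reals:
  fixes A :: "real mat"
  assumes A: "A \<in> carrier_mat n n" and sym: "transpose_mat A = A"
    and ev: "eigenvalue (map_mat complex_of_real A) k"
  shows "k \<in> \<real>"
proof -
  let ?A = "map_mat complex_of_real A"
  have A': "?A \<in> carrier_mat n n"
    using A by simp
  obtain x where x: "x \<in> carrier_vec n" "x \<noteq> 0\<^sub>v n" and Ax: "?A *\<^sub>v x = k \<cdot>\<^sub>v x"
    using ev A unfolding eigenvalue_def eigenvector_def by auto
  have "?A *\<^sub>v conjugate x = conjugate (?A *\<^sub>v x)"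
    using A x by (intro eq_vecI) (auto simp: conjugate_sprod_vec[of _ n] scalar_prod_def)
  then have Ax_conj: "?A *\<^sub>v conjugate x = cnj k \<cdot>\<^sub>v conjugate x"
    by (simp add: Ax conjugate_smult_vec)
  have "k * (x \<bullet>c x) = (?A *\<^sub>v x) \<bullet> conjugate x"
    using x by (simp add: Ax)
  also have "\<dots> = (transpose_mat ?A *\<^sub>v x) \<bullet> conjugate x"
    by (simp add: map_mat_transpose sym)
  also have "\<dots> = x \<bullet> (?A *\<^sub>v conjugate x)"
    using A' x by (intro transpose_vec_mult_scalar) auto
  also have "\<dots> = cnj k * (x \<bullet>c x)"
    using x by (simp add: Ax_conj)
  finally have "k = cnj k"
    using x by simp
  then show ?thesis
    using Reals_cnj_iff by metis
qed

section \<open>Eigenvalues of second-order block matrices\<close>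

lemma smult_append_vec: "k \<cdot>\<^sub>v (x @\<^sub>v y) = (k \<cdot>\<^sub>v x) @\<^sub>v (k \<cdot>\<^sub>v y)"
  by (intro eq_vecI) auto

lemma append_vec_eq_zero_iff:
  assumes "x \<in> carrier_vec n" and "y \<in> carrier_vec m"
  shows "x @\<^sub>v y = 0\<^sub>v (n + m) \<longleftrightarrow> x = 0\<^sub>v n \<and> y = 0\<^sub>v m"
proof -
  have "0\<^sub>v (n + m) = 0\<^sub>v n @\<^sub>v (0\<^sub>v m :: 'a vec)"
    by (intro eq_vecI) auto
  then show ?thesis
    using assms by simp
qed

lemma smult_mat_mult_mat_vec:
  assumes "A \<in> carrier_mat nr nc" and "v \<in> carrier_vec nc"
  shows "(k \<cdot>\<^sub>m A) *\<^sub>v v = k \<cdot>\<^sub>v (A *\<^sub>v v)"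
  using assms by (intro eq_vecI) (auto simp: scalar_prod_def sum_distrib_left mult.assoc)

lemma second_order_block_mult_vec:
  fixes P :: "'a :: comm_ring_1 mat"
  assumes P: "P \<in> carrier_mat n n" and x: "x \<in> carrier_vec n" and y: "y \<in> carrier_vec n"
  shows "four_block_mat (0\<^sub>m n n) (1\<^sub>m n) ((- a) \<cdot>\<^sub>m P) (- (t \<cdot>\<^sub>m 1\<^sub>m n + g \<cdot>\<^sub>m P)) *\<^sub>v (x @\<^sub>v y)
    = y @\<^sub>v (- (a \<cdot>\<^sub>v (P *\<^sub>v x)) - t \<cdot>\<^sub>v y - g \<cdot>\<^sub>v (P *\<^sub>v y))"
proof -
  have "- (t \<cdot>\<^sub>m 1\<^sub>m n + g \<cdot>\<^sub>m P) *\<^sub>v y = - (t \<cdot>\<^sub>v y + g \<cdot>\<^sub>v (P *\<^sub>v y))"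
    using P y by (simp add: add_mult_distrib_mat_vec[of _ n n] smult_mat_mult_mat_vec[of _ n n])
  then show ?thesis
    using P x y
    by (simp add: four_block_mat_mult_vec[of _ n n _ n _ n] smult_mat_mult_mat_vec[of _ n n])
      (intro eq_vecI; simp)
qed

lemma second_order_block_eigenvector_iff:
  fixes P :: "'a :: field mat"
  assumes P: "P \<in> carrier_mat n n" and x: "x \<in> carrier_vec n" and y: "y \<in> carrier_vec n"
  shows "four_block_mat (0\<^sub>m n n) (1\<^sub>m n) ((- a) \<cdot>\<^sub>m P) (- (t \<cdot>\<^sub>m 1\<^sub>m n + g \<cdot>\<^sub>m P)) *\<^sub>v (x @\<^sub>v y)
      = \<mu> \<cdot>\<^sub>v (x @\<^sub>v y)
    \<longleftrightarrow> y = \<mu> \<cdot>\<^sub>v x \<and> (a + g * \<mu>) \<cdot>\<^sub>v (P *\<^sub>v x) = (- (\<mu>\<^sup>2 + t * \<mu>)) \<cdot>\<^sub>v x"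
proof -
  have entry: "- (a * p) - t * (\<mu> * z) - g * (\<mu> * p) = \<mu> * (\<mu> * z)
      \<longleftrightarrow> (a + g * \<mu>) * p = - (\<mu>\<^sup>2 + t * \<mu>) * z" for p z :: 'a
  proof -
    have "(a + g * \<mu>) * p - (- (\<mu>\<^sup>2 + t * \<mu>) * z)
        = \<mu> * (\<mu> * z) - (- (a * p) - t * (\<mu> * z) - g * (\<mu> * p))"
      by (simp add: algebra_simps power2_eq_square)
    then show ?thesis
      by (metis eq_iff_diff_eq_0)
  qed
  have lower: "- (a \<cdot>\<^sub>v (P *\<^sub>v x)) - t \<cdot>\<^sub>v (\<mu> \<cdot>\<^sub>v x) - g \<cdot>\<^sub>v (P *\<^sub>v (\<mu> \<cdot>\<^sub>v x)) = \<mu> \<cdot>\<^sub>v (\<mu> \<cdot>\<^sub>v x)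
      \<longleftrightarrow> (a + g * \<mu>) \<cdot>\<^sub>v (P *\<^sub>v x) = (- (\<mu>\<^sup>2 + t * \<mu>)) \<cdot>\<^sub>v x"
    using P x by (simp add: vec_eq_iff mult_mat_vec entry)
  show ?thesis
    using P x y lower by (auto simp: second_order_block_mult_vec smult_append_vec)
qed

lemma eigenvalue_second_order_blockI:
  fixes P :: "'a :: field mat"
  assumes P: "P \<in> carrier_mat n n" and "eigenvalue P k" and root: "\<mu>\<^sup>2 + (t + g * k) * \<mu> + a * k = 0"
  shows "eigenvalue (four_block_mat (0\<^sub>m n n) (1\<^sub>m n) ((- a) \<cdot>\<^sub>m P) (- (t \<cdot>\<^sub>m 1\<^sub>m n + g \<cdot>\<^sub>m P))) \<mu>"
    (is "eigenvalue ?B \<mu>")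
proof -
  obtain x where x: "x \<in> carrier_vec n" "x \<noteq> 0\<^sub>v n" "P *\<^sub>v x = k \<cdot>\<^sub>v x"
    using P \<open>eigenvalue P k\<close> unfolding eigenvalue_def eigenvector_def by auto
  have "(a + g * \<mu>) * k + (\<mu>\<^sup>2 + t * \<mu>) = \<mu>\<^sup>2 + (t + g * k) * \<mu> + a * k"
    by (simp add: algebra_simps)
  then have "(a + g * \<mu>) * k = - (\<mu>\<^sup>2 + t * \<mu>)"
    unfolding root by (metis eq_neg_iff_add_eq_0)
  then have "(a + g * \<mu>) \<cdot>\<^sub>v (P *\<^sub>v x) = (- (\<mu>\<^sup>2 + t * \<mu>)) \<cdot>\<^sub>v x"
    by (simp add: x(3) smult_smult_assoc)
  then have "?B *\<^sub>v (x @\<^sub>v \<mu> \<cdot>\<^sub>v x) = \<mu> \<cdot>\<^sub>v (x @\<^sub>v \<mu> \<cdot>\<^sub>v x)"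
    using second_order_block_eigenvector_iff[OF P x(1), of "\<mu> \<cdot>\<^sub>v x"] x(1) by simp
  moreover have "x @\<^sub>v \<mu> \<cdot>\<^sub>v x \<noteq> 0\<^sub>v (n + n)"
    using x by (simp add: append_vec_eq_zero_iff)
  moreover have "x @\<^sub>v \<mu> \<cdot>\<^sub>v x \<in> carrier_vec (n + n)"
    using x by simp
  ultimately show ?thesis
    unfolding eigenvalue_def eigenvector_def using P by (intro exI[of _ "x @\<^sub>v \<mu> \<cdot>\<^sub>v x"]) simp
qed

lemma eigenvalue_second_order_blockD:
  fixes P :: "'a :: field mat"
  assumes P: "P \<in> carrier_mat n n" and k0: "eigenvalue P k0"
    and ev: "eigenvalue (four_block_mat (0\<^sub>m n n) (1\<^sub>m n) ((- a) \<cdot>\<^sub>m P) (- (t \<cdot>\<^sub>m 1\<^sub>m n + g \<cdot>\<^sub>m P))) \<mu>"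
    (is "eigenvalue ?B \<mu>")
  shows "\<exists>k. eigenvalue P k \<and> \<mu>\<^sup>2 + (t + g * k) * \<mu> + a * k = 0"
proof -
  obtain w where w: "w \<in> carrier_vec (n + n)" "w \<noteq> 0\<^sub>v (n + n)" and Bw: "?B *\<^sub>v w = \<mu> \<cdot>\<^sub>v w"
    using P ev unfolding eigenvalue_def eigenvector_def by auto
  define x y where "x = vec_first w n" and "y = vec_last w n"
  have x: "x \<in> carrier_vec n" and y: "y \<in> carrier_vec n" and w_xy: "w = x @\<^sub>v y"
    using w(1) by (simp_all add: x_def y_def)
  then have y_eq: "y = \<mu> \<cdot>\<^sub>v x" and Px: "(a + g * \<mu>) \<cdot>\<^sub>v (P *\<^sub>v x) = (- (\<mu>\<^sup>2 + t * \<mu>)) \<cdot>\<^sub>v x"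
    using Bw second_order_block_eigenvector_iff[OF P x y] by simp_all
  have "x \<noteq> 0\<^sub>v n"
    using w(2) x unfolding w_xy y_eq by (auto simp: append_vec_eq_zero_iff)
  then obtain i where i: "i < n" "x $ i \<noteq> 0"
    using x by (metis carrier_vecD eq_vecI index_zero_vec(1,2))
  have root: "\<mu>\<^sup>2 + (t + g * k) * \<mu> + a * k = (\<mu>\<^sup>2 + t * \<mu>) + k * (a + g * \<mu>)" for k
    by (simp add: algebra_simps)
  show ?thesis
  proof (cases "a + g * \<mu> = 0")
    case True
    with arg_cong[OF Px, of "\<lambda>v. v $ i"] i x P have "- (\<mu>\<^sup>2 + t * \<mu>) * x $ i = 0"
      by simp
    with i(2) have "\<mu>\<^sup>2 + t * \<mu> = 0"
      by (metis mult_eq_0_iff neg_equal_0_iff_equal)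
    with True k0 root show ?thesis
      by auto
  next
    case False
    define k where "k = - (\<mu>\<^sup>2 + t * \<mu>) / (a + g * \<mu>)"
    have "P *\<^sub>v x = (1 / (a + g * \<mu>)) \<cdot>\<^sub>v ((a + g * \<mu>) \<cdot>\<^sub>v (P *\<^sub>v x))"
      using False P x by (simp add: smult_smult_assoc)
    also have "\<dots> = k \<cdot>\<^sub>v x"
      unfolding Px by (simp add: smult_smult_assoc k_def)
    finally have "eigenvalue P k"
      using P x \<open>x \<noteq> 0\<^sub>v n\<close> unfolding eigenvalue_def eigenvector_def by auto
    moreover have "\<mu>\<^sup>2 + (t + g * k) * \<mu> + a * k = 0"
      unfolding root using False by (simp add: k_def)
    ultimately show ?thesis
      by blast
  qed
qed

lemma eigenvalue_second_order_block_iff: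
  fixes P :: "'a :: field mat"
  assumes "P \<in> carrier_mat n n" and "eigenvalue P k0"
  shows "eigenvalue (four_block_mat (0\<^sub>m n n) (1\<^sub>m n) ((- a) \<cdot>\<^sub>m P) (- (t \<cdot>\<^sub>m 1\<^sub>m n + g \<cdot>\<^sub>m P))) \<mu>
    \<longleftrightarrow> (\<exists>k. eigenvalue P k \<and> \<mu>\<^sup>2 + (t + g * k) * \<mu> + a * k = 0)"
proof
  assume "eigenvalue (four_block_mat (0\<^sub>m n n) (1\<^sub>m n) ((- a) \<cdot>\<^sub>m P) (- (t \<cdot>\<^sub>m 1\<^sub>m n + g \<cdot>\<^sub>m P))) \<mu>"
  then show "\<exists>k. eigenvalue P k \<and> \<mu>\<^sup>2 + (t + g * k) * \<mu> + a * k = 0"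
    by (rule eigenvalue_second_order_blockD[OF assms])
next
  assume "\<exists>k. eigenvalue P k \<and> \<mu>\<^sup>2 + (t + g * k) * \<mu> + a * k = 0"
  then show "eigenvalue (four_block_mat (0\<^sub>m n n) (1\<^sub>m n) ((- a) \<cdot>\<^sub>m P) (- (t \<cdot>\<^sub>m 1\<^sub>m n + g \<cdot>\<^sub>m P))) \<mu>"
    using eigenvalue_second_order_blockI[OF assms(1)] by blast
qed

section \<open>Stability of the accelerated gradient flow\<close>

lemma map_mat_agf_mat:
  assumes "Q \<in> carrier_mat n n"
  shows "map_mat complex_of_real (agf_mat \<alpha> \<beta> \<gamma> Q)
    = four_block_mat (0\<^sub>m n n) (1\<^sub>m n) ((- of_real \<alpha>) \<cdot>\<^sub>m map_mat of_real Q)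
        (- (of_real (1 - \<beta>) \<cdot>\<^sub>m 1\<^sub>m n + of_real (\<gamma> * \<alpha>) \<cdot>\<^sub>m map_mat of_real Q))"
  using assms by (intro eq_matI) (auto simp: agf_mat_def Let_def)

lemma eigenvalue_map_of_real_symmetric_iff:
  assumes "A \<in> carrier_mat n n" and "transpose_mat A = A"
  shows "eigenvalue (map_mat complex_of_real A) k \<longleftrightarrow> (\<exists>c. k = of_real c \<and> eigenvalue A c)"
  using assms real_symmetric_eigenvalue_in_Reals eigenvalue_map_of_real_iff by (metis Reals_cases)

lemma eigenvalue_agf_mat_iff:
  assumes Q: "Q \<in> carrier_mat n n" and sym: "transpose_mat Q = Q" and c0: "eigenvalue Q c0"
  shows "eigenvalue (map_mat complex_of_real (agf_mat \<alpha> \<beta> \<gamma> Q)) \<mu>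
    \<longleftrightarrow> (\<exists>c. eigenvalue Q c \<and> \<mu>\<^sup>2 + of_real (1 - \<beta> + \<gamma> * (\<alpha> * c)) * \<mu> + of_real (\<alpha> * c) = 0)"
proof -
  have "eigenvalue (map_mat complex_of_real (agf_mat \<alpha> \<beta> \<gamma> Q)) \<mu>
    \<longleftrightarrow> (\<exists>k. eigenvalue (map_mat complex_of_real Q) k
          \<and> \<mu>\<^sup>2 + (of_real (1 - \<beta>) + of_real (\<gamma> * \<alpha>) * k) * \<mu> + of_real \<alpha> * k = 0)"
    unfolding map_mat_agf_mat[OF Q]
    by (rule eigenvalue_second_order_block_iff)
      (use Q c0 eigenvalue_map_of_real_iff in auto)
  also have "\<dots> \<longleftrightarrow> (\<exists>c. eigenvalue Q c
      \<and> \<mu>\<^sup>2 + of_real (1 - \<beta> + \<gamma> * (\<alpha> * c)) * \<mu> + of_real (\<alpha> * c) = 0)"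
    by (auto simp: eigenvalue_map_of_real_symmetric_iff[OF Q sym] algebra_simps)
  finally show ?thesis .
qed

text \<open>Here \<open>c\<close> stands for \<open>\<alpha>\<close> times an eigenvalue of \<open>Q\<close>.\<close>

definition mode_decays_at_rate :: "real \<Rightarrow> real \<Rightarrow> real \<Rightarrow> real \<Rightarrow> bool" where
  "mode_decays_at_rate \<beta> \<gamma> \<rho> c \<longleftrightarrow>
     (\<forall>s::complex. s\<^sup>2 + of_real (1 - \<beta> + \<gamma> * c) * s + of_real c = 0 \<longrightarrow> Re s \<le> - \<rho>)"

lemma mode_decays_at_rate_iff:
  "mode_decays_at_rate \<beta> \<gamma> \<rho> c \<longleftrightarrow> 2 * \<rho> \<le> 1 - \<beta> + \<gamma> * c \<and> 0 \<le> \<rho>\<^sup>2 - (1 - \<beta> + \<gamma> * c) * \<rho> + c"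
  unfolding mode_decays_at_rate_def by (rule quadratic_roots_Re_le_iff)

lemma agf_exp_stable_iff_modes:
  "agf_exp_stable n m L \<alpha> \<beta> \<gamma> \<rho> \<longleftrightarrow>
    0 < \<rho> \<and> (\<forall>Q q c. in_QmL n m L Q q \<longrightarrow> eigenvalue Q c \<longrightarrow> mode_decays_at_rate \<beta> \<gamma> \<rho> (\<alpha> * c))"
proof -
  have "(\<forall>\<mu>. eigenvalue (map_mat complex_of_real (agf_mat \<alpha> \<beta> \<gamma> Q)) \<mu> \<longrightarrow> Re \<mu> \<le> - \<rho>)
    \<longleftrightarrow> (\<forall>c. eigenvalue Q c \<longrightarrow> mode_decays_at_rate \<beta> \<gamma> \<rho> (\<alpha> * c))"
    if "in_QmL n m L Q q" for Q q
    using that eigenvalue_agf_mat_iff[of Q n m \<alpha> \<beta> \<gamma>]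
    unfolding in_QmL_def mode_decays_at_rate_def by blast
  then show ?thesis
    unfolding agf_exp_stable_def by blast
qed

lemma affine_nonneg_between:
  fixes u w a b c :: real
  assumes "0 \<le> u + w * a" and "0 \<le> u + w * b" and "a \<le> c" and "c \<le> b"
  shows "0 \<le> u + w * c"
proof (cases "0 \<le> w")
  case True
  have "w * a \<le> w * c"
    using \<open>a \<le> c\<close> True by (rule mult_left_mono)
  with assms(1) show ?thesis by linarith
next
  case False
  then have "w * b \<le> w * c"
    using \<open>c \<le> b\<close> by (simp add: mult_left_mono_neg)
  with assms(2) show ?thesis by linarith
qed

lemma mode_decays_at_rate_between:
  assumes "mode_decays_at_rate \<beta> \<gamma> \<rho> a" and "mode_decays_at_rate \<beta> \<gamma> \<rho> b"
    and "a \<le> c" and "c \<le> b"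
  shows "mode_decays_at_rate \<beta> \<gamma> \<rho> c"
proof -
  have shifted: "\<rho>\<^sup>2 - (1 - \<beta> + \<gamma> * x) * \<rho> + x = (\<rho>\<^sup>2 - (1 - \<beta>) * \<rho>) + (1 - \<gamma> * \<rho>) * x" for x
    by (simp add: algebra_simps)
  have "0 \<le> (1 - \<beta> - 2 * \<rho>) + \<gamma> * x \<and> 0 \<le> (\<rho>\<^sup>2 - (1 - \<beta>) * \<rho>) + (1 - \<gamma> * \<rho>) * x"
    if "mode_decays_at_rate \<beta> \<gamma> \<rho> x" for x
    using that unfolding mode_decays_at_rate_iff shifted by auto
  then have "0 \<le> (1 - \<beta> - 2 * \<rho>) + \<gamma> * c \<and> 0 \<le> (\<rho>\<^sup>2 - (1 - \<beta>) * \<rho>) + (1 - \<gamma> * \<rho>) * c"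
    using assms affine_nonneg_between[of _ _ a b c] by meson
  then show ?thesis
    unfolding mode_decays_at_rate_iff shifted by auto
qed

lemma mode_decays_at_rate_sq_le:
  assumes "0 \<le> \<rho>" and "mode_decays_at_rate \<beta> \<gamma> \<rho> c"
  shows "\<rho>\<^sup>2 \<le> c"
proof -
  have "2 * \<rho> \<le> 1 - \<beta> + \<gamma> * c" and "0 \<le> \<rho>\<^sup>2 - (1 - \<beta> + \<gamma> * c) * \<rho> + c"
    using assms(2) unfolding mode_decays_at_rate_iff by auto
  moreover have "2 * \<rho> * \<rho> \<le> (1 - \<beta> + \<gamma> * c) * \<rho>"
    using calculation(1) assms(1) by (rule mult_right_mono)
  ultimately show ?thesis
    by (simp add: power2_eq_square)
qed

section \<open>The class \<open>Q_m^L\<close>\<close>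

lemma mat_diag_mult_vec:
  assumes "x \<in> carrier_vec n"
  shows "mat_diag n d *\<^sub>v x = vec n (\<lambda>i. d i * x $ i)"
proof (intro eq_vecI)
  fix i
  assume "i < dim_vec (vec n (\<lambda>i. d i * x $ i))"
  then have i: "i < n" by simp
  have "(mat_diag n d *\<^sub>v x) $ i = (\<Sum>j\<in>{0..<n}. (if i = j then d j else 0) * x $ j)"
    using assms i by (simp add: mat_diag_def scalar_prod_def)
  also have "\<dots> = (\<Sum>j\<in>{0..<n}. if j = i then d i * x $ i else 0)"
    by (rule sum.cong) auto
  also have "\<dots> = d i * x $ i"
    using i by simp
  finally show "(mat_diag n d *\<^sub>v x) $ i = vec n (\<lambda>i. d i * x $ i) $ i"
    using i by simp
qed (simp add: mat_diag_def)

lemma eigenvalue_mat_diag_iff: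
  fixes d :: "nat \<Rightarrow> 'a :: field"
  shows "eigenvalue (mat_diag n d) k \<longleftrightarrow> (\<exists>i<n. d i = k)"
proof
  assume "eigenvalue (mat_diag n d) k"
  then obtain x where x: "x \<in> carrier_vec n" "x \<noteq> 0\<^sub>v n" and dx: "mat_diag n d *\<^sub>v x = k \<cdot>\<^sub>v x"
    unfolding eigenvalue_def eigenvector_def by (auto simp: mat_diag_def)
  obtain i where i: "i < n" "x $ i \<noteq> 0"
    using x by (metis carrier_vecD eq_vecI index_zero_vec(1,2))
  have "d i * x $ i = k * x $ i"
    using arg_cong[OF dx, of "\<lambda>v. v $ i"] x i by (simp add: mat_diag_mult_vec)
  with i show "\<exists>i<n. d i = k"
    by auto
next
  assume "\<exists>i<n. d i = k"
  then obtain i where i: "i < n" "d i = k"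
    by blast
  have "mat_diag n d *\<^sub>v unit_vec n i = k \<cdot>\<^sub>v unit_vec n i"
    using i by (intro eq_vecI) (auto simp: mat_diag_mult_vec)
  moreover have "unit_vec n i \<noteq> (0\<^sub>v n :: 'a vec)"
    using i by (metis index_unit_vec(1) index_zero_vec(1) zero_neq_one)
  ultimately show "eigenvalue (mat_diag n d) k"
    unfolding eigenvalue_def eigenvector_def by (intro exI[of _ "unit_vec n i"]) (simp add: mat_diag_def)
qed

lemma mat_diag_positive_definite:
  fixes d :: "nat \<Rightarrow> real"
  assumes d: "\<And>i. i < n \<Longrightarrow> 0 < d i" and x: "x \<in> carrier_vec n" "x \<noteq> 0\<^sub>v n"
  shows "0 < x \<bullet> (mat_diag n d *\<^sub>v x)"
proof -
  obtain i where i: "i < n" "x $ i \<noteq> 0"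
    using x by (metis carrier_vecD eq_vecI index_zero_vec(1,2))
  have "x \<bullet> (mat_diag n d *\<^sub>v x) = (\<Sum>j\<in>{0..<n}. d j * (x $ j)\<^sup>2)"
    using x by (simp add: mat_diag_mult_vec scalar_prod_def power2_eq_square algebra_simps)
  also have "\<dots> > 0"
    by (rule sum_pos2[of _ i]) (use i d in \<open>auto simp: less_imp_le\<close>)
  finally show ?thesis .
qed

lemma in_QmL_mat_diag:
  assumes "0 < m" and "m \<le> L" and "1 \<le> n" and "m < L \<Longrightarrow> 2 \<le> n"
  shows "in_QmL n m L (mat_diag n (\<lambda>i. if i = 0 then L else m)) (0\<^sub>v n)"
proof -
  let ?d = "\<lambda>i. if i = 0 then L else m"
  have eigenvalues: "eigenvalue (mat_diag n ?d) c \<longleftrightarrow> (\<exists>i<n. ?d i = c)" for c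
    by (rule eigenvalue_mat_diag_iff)
  have "?d (n - 1) = m"
  proof (cases "m < L")
    case True
    with assms(4) show ?thesis by simp
  next
    case False
    with assms(2) show ?thesis by simp
  qed
  moreover have "n - 1 < n"
    using assms(3) by simp
  ultimately have "eigenvalue (mat_diag n ?d) m"
    unfolding eigenvalues by blast
  moreover have "eigenvalue (mat_diag n ?d) L"
    using assms(3) unfolding eigenvalues by auto
  moreover have "m \<le> c \<and> c \<le> L" if "eigenvalue (mat_diag n ?d) c" for c
    using that assms(2) unfolding eigenvalues by auto
  moreover have "transpose_mat (mat_diag n ?d) = mat_diag n ?d"
    by (intro eq_matI) (auto simp: mat_diag_def)
  moreover have "0 < x \<bullet> (mat_diag n ?d *\<^sub>v x)" if "x \<in> carrier_vec n" "x \<noteq> 0\<^sub>v n" for x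
    using assms(1,2) that by (intro mat_diag_positive_definite) auto
  ultimately show ?thesis
    unfolding in_QmL_def by (simp add: mat_diag_dim)
qed

lemma agf_exp_stable_iff_extreme_modes:
  assumes "0 < m" and "m \<le> L" and "1 \<le> n" and "m < L \<Longrightarrow> 2 \<le> n" and "0 < \<alpha>"
  shows "agf_exp_stable n m L \<alpha> \<beta> \<gamma> \<rho> \<longleftrightarrow>
    0 < \<rho> \<and> mode_decays_at_rate \<beta> \<gamma> \<rho> (\<alpha> * m) \<and> mode_decays_at_rate \<beta> \<gamma> \<rho> (\<alpha> * L)"
  unfolding agf_exp_stable_iff_modes
proof
  let ?W = "mat_diag n (\<lambda>i. if i = 0 then L else m)"
  have witness: "in_QmL n m L ?W (0\<^sub>v n)"
    using assms(1-4) by (rule in_QmL_mat_diag)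
  then have "eigenvalue ?W m" and "eigenvalue ?W L"
    unfolding in_QmL_def by simp_all
  moreover assume "0 < \<rho> \<and> (\<forall>Q q c. in_QmL n m L Q q \<longrightarrow> eigenvalue Q c \<longrightarrow> mode_decays_at_rate \<beta> \<gamma> \<rho> (\<alpha> * c))"
  ultimately show "0 < \<rho> \<and> mode_decays_at_rate \<beta> \<gamma> \<rho> (\<alpha> * m) \<and> mode_decays_at_rate \<beta> \<gamma> \<rho> (\<alpha> * L)"
    using witness by blast
next
  assume extreme: "0 < \<rho> \<and> mode_decays_at_rate \<beta> \<gamma> \<rho> (\<alpha> * m) \<and> mode_decays_at_rate \<beta> \<gamma> \<rho> (\<alpha> * L)"
  have "mode_decays_at_rate \<beta> \<gamma> \<rho> (\<alpha> * c)" if "in_QmL n m L Q q" and "eigenvalue Q c" for Q q c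
  proof (rule mode_decays_at_rate_between[of \<beta> \<gamma> \<rho> "\<alpha> * m" "\<alpha> * L"])
    have "m \<le> c" and "c \<le> L"
      using that unfolding in_QmL_def by auto
    with assms(5) show "\<alpha> * m \<le> \<alpha> * c" and "\<alpha> * c \<le> \<alpha> * L"
      by simp_all
  qed (use extreme in auto)
  with extreme show "0 < \<rho> \<and> (\<forall>Q q c. in_QmL n m L Q q \<longrightarrow> eigenvalue Q c \<longrightarrow> mode_decays_at_rate \<beta> \<gamma> \<rho> (\<alpha> * c))"
    by blast
qed

lemma agf_exp_stable_normalized_iff:
  assumes "0 < m" and "m \<le> L" and "1 \<le> n" and "m < L \<Longrightarrow> 2 \<le> n" and \<kappa>: "L / m = r\<^sup>2"
  shows "agf_exp_stable n m L (1 / L) \<beta> \<gamma> \<rho> \<longleftrightarrow>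
    0 < \<rho> \<and> mode_decays_at_rate \<beta> \<gamma> \<rho> (1 / r\<^sup>2) \<and> mode_decays_at_rate \<beta> \<gamma> \<rho> 1"
proof -
  have "1 / L * m = 1 / (L / m)" and "1 / L * L = 1"
    using assms(1,2) by simp_all
  then show ?thesis
    unfolding \<kappa> using agf_exp_stable_iff_extreme_modes[OF assms(1-4), of "1 / L"] assms(1,2) by simp
qed

section \<open>Optimal parameters\<close>

lemma optimal_parameters_modes:
  assumes r: "1 \<le> r" and v: "0 \<le> v" "v \<le> 1"
  shows "mode_decays_at_rate (1 + (v - 2) / r) (v * r) (1 / r) (1 / r\<^sup>2)"
    and "mode_decays_at_rate (1 + (v - 2) / r) (v * r) (1 / r) 1"
proof -
  have "1 - (1 + (v - 2) / r) + v * r * (1 / r\<^sup>2) = 2 / r"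
    using r by (simp add: field_simps power2_eq_square)
  then show "mode_decays_at_rate (1 + (v - 2) / r) (v * r) (1 / r) (1 / r\<^sup>2)"
    unfolding mode_decays_at_rate_iff by (simp add: power2_eq_square)
  have "1 \<le> r\<^sup>2"
    using r by (rule one_le_power)
  then have "0 \<le> r - 1 / r" and "0 \<le> 1 - 1 / r\<^sup>2"
    using r by (simp_all add: field_simps power2_eq_square)
  moreover have "1 - (1 + (v - 2) / r) + v * r * 1 - 2 * (1 / r) = v * (r - 1 / r)"
    and "(1 / r)\<^sup>2 - (1 - (1 + (v - 2) / r) + v * r * 1) * (1 / r) + 1 = (1 - v) * (1 - 1 / r\<^sup>2)"
    using r by (simp_all add: field_simps power2_eq_square)
  ultimately show "mode_decays_at_rate (1 + (v - 2) / r) (v * r) (1 / r) 1"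
    unfolding mode_decays_at_rate_iff using v by (smt (verit) mult_nonneg_nonneg)
qed

lemma optimal_parameters_unique:
  assumes r: "1 < r"
    and modes: "mode_decays_at_rate \<beta> \<gamma> (1 / r) (1 / r\<^sup>2)" "mode_decays_at_rate \<beta> \<gamma> (1 / r) 1"
  shows "\<exists>v\<in>{0..1}. \<beta> = 1 + (v - 2) / r \<and> \<gamma> = v * r"
proof (intro bexI conjI)
  define v where "v = \<gamma> / r"
  show \<gamma>: "\<gamma> = v * r"
    using r by (simp add: v_def)
  have "2 / r \<le> 1 - \<beta> + \<gamma> / r\<^sup>2" and "0 \<le> 2 / r\<^sup>2 - (1 - \<beta> + \<gamma> / r\<^sup>2) / r"
    using modes(1) unfolding mode_decays_at_rate_iff by (simp_all add: power2_eq_square)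
  then have "1 - \<beta> + \<gamma> / r\<^sup>2 = 2 / r"
    using r by (simp add: field_simps power2_eq_square)
  moreover have "1 + (v - 2) / r = 1 + \<gamma> / r\<^sup>2 - 2 / r"
    using r by (simp add: v_def field_simps power2_eq_square)
  ultimately show \<beta>: "\<beta> = 1 + (v - 2) / r"
    by linarith
  have "0 \<le> v * (r - 1 / r)" and "0 \<le> (1 - v) * (1 - 1 / r\<^sup>2)"
    using modes(2) r unfolding mode_decays_at_rate_iff \<beta> \<gamma> by (simp_all add: field_simps power2_eq_square)
  moreover have "1 < r\<^sup>2"
    using r by simp
  then have "0 < r - 1 / r" and "0 < 1 - 1 / r\<^sup>2"
    using r by (simp_all add: field_simps power2_eq_square)
  ultimately show "v \<in> {0..1}"
    by (simp add: zero_le_mult_iff)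
qed

lemma optimal_rate_bound:
  assumes "0 < r" and "0 \<le> \<rho>" and "mode_decays_at_rate \<beta> \<gamma> \<rho> (1 / r\<^sup>2)"
  shows "\<rho> \<le> 1 / r"
proof (rule power2_le_imp_le)
  show "\<rho>\<^sup>2 \<le> (1 / r)\<^sup>2"
    using mode_decays_at_rate_sq_le[OF assms(2,3)] by (simp add: power_one_over)
qed (use assms(1) in simp)

lemma nesterov_parameter:
  fixes r :: real
  assumes "2 \<le> r"
  defines "v \<equiv> (r - 2) / (r\<^sup>2 - 1)"
  shows "v \<in> {0..1}" and "v * r = 1 + (v - 2) / r"
proof -
  have "2\<^sup>2 \<le> r\<^sup>2"
    using assms(1) by (rule power_mono) simp
  then have "3 \<le> r\<^sup>2 - 1"
    by simp
  moreover have "r \<le> r\<^sup>2"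
    using assms(1) by (simp add: power2_eq_square mult_le_cancel_left1)
  ultimately show "v \<in> {0..1}"
    using assms(1) by (simp add: v_def le_divide_eq divide_le_eq)
  show "v * r = 1 + (v - 2) / r"
    using assms(1) \<open>3 \<le> r\<^sup>2 - 1\<close> by (simp add: v_def field_simps power2_eq_square)
qed

theorem proposition5:
  fixes m L :: real and n :: nat
  assumes "0 < m" and "m \<le> L"
    and "1 \<le> n" and "m < L \<Longrightarrow> 2 \<le> n"
  shows
    \<comment> \<open>the parameters beta = 1 + (v-2)/sqrt kappa, gamma = v sqrt kappa, v in [0,1], achieve rho = 1/sqrt kappa\<close>
    "(\<forall>v \<in> {0..1}. agf_exp_stable n m L (1 / L)
        (1 + (v - 2) / sqrt (L / m)) (v * sqrt (L / m)) (1 / sqrt (L / m)))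
     \<comment> \<open>no larger rate is achievable by any constant parameters\<close>
     \<and> (\<forall>\<beta> \<gamma> \<rho>. agf_exp_stable n m L (1 / L) \<beta> \<gamma> \<rho> \<longrightarrow> \<rho> \<le> 1 / sqrt (L / m))
     \<comment> \<open>conversely (for kappa > 1) the optimal rate forces parameters of this form\<close>
     \<and> (m < L \<longrightarrow> (\<forall>\<beta> \<gamma>. agf_exp_stable n m L (1 / L) \<beta> \<gamma> (1 / sqrt (L / m)) \<longrightarrow>
          (\<exists>v \<in> {0..1}. \<beta> = 1 + (v - 2) / sqrt (L / m) \<and> \<gamma> = v * sqrt (L / m))))
     \<comment> \<open>heavy-ball dynamics (gamma = 0), v = 0\<close>
     \<and> agf_exp_stable n m L (1 / L) (1 + (0 - 2) / sqrt (L / m)) (0 * sqrt (L / m)) (1 / sqrt (L / m))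
     \<comment> \<open>Nesterov's dynamics (gamma = beta) for kappa >= 4\<close>
     \<and> (4 \<le> L / m \<longrightarrow>
          (let v = (sqrt (L / m) - 2) / (L / m - 1) in
             v \<in> {0..1} \<and> v * sqrt (L / m) = 1 + (v - 2) / sqrt (L / m) \<and>
             agf_exp_stable n m L (1 / L)
               (1 + (v - 2) / sqrt (L / m)) (v * sqrt (L / m)) (1 / sqrt (L / m))))"
proof -
  define r where "r = sqrt (L / m)"
  have \<kappa>: "L / m = r\<^sup>2" and "1 \<le> r"
    using assms(1,2) by (simp_all add: r_def)
  note stable_iff = agf_exp_stable_normalized_iff[OF assms \<kappa>]
  have optimal: "agf_exp_stable n m L (1 / L) (1 + (v - 2) / r) (v * r) (1 / r)" if "v \<in> {0..1}" for v
    using that \<open>1 \<le> r\<close> by (simp add: stable_iff optimal_parameters_modes)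
  have heavy_ball: "agf_exp_stable n m L (1 / L) (1 + (0 - 2) / r) (0 * r) (1 / r)"
    by (rule optimal) simp
  have rate_bound: "\<rho> \<le> 1 / r" if "agf_exp_stable n m L (1 / L) \<beta> \<gamma> \<rho>" for \<beta> \<gamma> \<rho>
    using that \<open>1 \<le> r\<close> optimal_rate_bound[of r \<rho> \<beta> \<gamma>] by (simp add: stable_iff)
  have unique: "\<exists>v\<in>{0..1}. \<beta> = 1 + (v - 2) / r \<and> \<gamma> = v * r"
    if "m < L" and "agf_exp_stable n m L (1 / L) \<beta> \<gamma> (1 / r)" for \<beta> \<gamma>
  proof (rule optimal_parameters_unique)
    show "1 < r"
      using that(1) assms(1) by (simp add: r_def)
  qed (use that(2) in \<open>simp_all add: stable_iff\<close>)
  have nesterov: "let v = (r - 2) / (r\<^sup>2 - 1) in v \<in> {0..1} \<and> v * r = 1 + (v - 2) / r \<and>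
      agf_exp_stable n m L (1 / L) (1 + (v - 2) / r) (v * r) (1 / r)" if "4 \<le> r\<^sup>2"
  proof -
    have "2 \<le> r"
      using power2_le_imp_le[of 2 r] that \<open>1 \<le> r\<close> by simp
    then show ?thesis
      using nesterov_parameter[of r] optimal unfolding Let_def by blast
  qed
  show ?thesis
    unfolding r_def[symmetric] unfolding \<kappa>
    using optimal rate_bound unique heavy_ball nesterov by blast
qed

end
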